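(* Let $X$ be a Hausdorff space. The following are equivalent: (a) $X$ is hereditarily disconnected; (b) there is a positive integer $n$ such that $\mathcal{F}_n(X)$ is hereditarily disconnected; (b') for every positive integer $n$, $\mathcal{F}_n(X)$ is hereditarily disconnected; (c) $\mathcal{F}(X)$ is hereditarily disconnected.
   Context: $\mathcal{F}(X)$ is the set of nonempty finite subsets of $X$ and $\mathcal{F}_n(X)$ the set of nonempty subsets with at most $n$ points, with the Vietoris topology (generated by $U^+=\{A: A\subset U\}$ and $U^-=\{A: A\cap U\neq\emptyset\}$ for $U$ open in $X$). A space is hereditarily disconnected if every nonempty connected subset is a singleton. *)

theory Defs
  imports "HOL-Analysis.Analysis"
begin

definition vietoris_on :: "'a topology \<Rightarrow> 'a set set \<Rightarrow> 'a set topology" where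
  "vietoris_on X \<H> = topology_generated_by
     ({{A \<in> \<H>. A \<subseteq> U} | U. openin X U} \<union> {{A \<in> \<H>. A \<inter> U \<noteq> {}} | U. openin X U})"

definition fin_subsets :: "'a topology \<Rightarrow> 'a set set" where
  "fin_subsets X = {A. A \<subseteq> topspace X \<and> finite A \<and> A \<noteq> {}}"

definition fin_subsets_le :: "nat \<Rightarrow> 'a topology \<Rightarrow> 'a set set" where
  "fin_subsets_le n X = {A. A \<subseteq> topspace X \<and> finite A \<and> A \<noteq> {} \<and> card A \<le> n}"

definition hyperspace_F :: "'a topology \<Rightarrow> 'a set topology" where
  "hyperspace_F X = vietoris_on X (fin_subsets X)"

definition hyperspace_Fn :: "nat \<Rightarrow> 'a topology \<Rightarrow> 'a set topology" where
  "hyperspace_Fn n X = vietoris_on X (fin_subsets_le n X)"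

definition hereditarily_disconnected :: "'a topology \<Rightarrow> bool" where
  "hereditarily_disconnected X \<longleftrightarrow>
     (\<forall>C. connectedin X C \<and> C \<noteq> {} \<longrightarrow> (\<exists>x. C = {x}))"

end

theory Submission
  imports Defs
begin

text \<open>
  The singleton map embeds X into any hyperspace containing all singletons, so hereditary
  disconnectedness passes down from the hyperspace to X. For the converse, let \<C> be a connected
  family of finite sets with union Y. For a clopen V of Y, the members of \<C> meeting V and those
  contained in Y - V form a Vietoris-clopen partition of \<C>; hence every member A of \<C> meets
  every nonempty clopen subset of Y. In Y, a clopen neighbourhood Q of a point y with A \<inter> Q of
  least cardinality is then connected, so Q = {y} and y \<in> A. Thus every member of \<C> equals Y.
\<close>

lemma hereditarily_disconnectedD:
  "hereditarily_disconnected X \<Longrightarrow> connectedin X C \<Longrightarrow> C \<noteq> {} \<Longrightarrow> \<exists>x. C = {x}"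
  unfolding hereditarily_disconnected_def by blast

lemma openin_vietoris_on_subset:
  "openin X U \<Longrightarrow> openin (vietoris_on X \<H>) {A \<in> \<H>. A \<subseteq> U}"
  unfolding vietoris_on_def by (rule topology_generated_by_Basis) blast

lemma openin_vietoris_on_meets:
  "openin X U \<Longrightarrow> openin (vietoris_on X \<H>) {A \<in> \<H>. A \<inter> U \<noteq> {}}"
  unfolding vietoris_on_def by (rule topology_generated_by_Basis) blast

lemma topspace_vietoris_on:
  assumes "\<And>A. A \<in> \<H> \<Longrightarrow> A \<subseteq> topspace X"
  shows "topspace (vietoris_on X \<H>) = \<H>"
  using assms unfolding vietoris_on_def by auto

lemma continuous_map_singleton_vietoris_on:
  assumes "\<And>x. x \<in> topspace X \<Longrightarrow> {x} \<in> \<H>"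
  shows "continuous_map X (vietoris_on X \<H>) (\<lambda>x. {x})"
  unfolding vietoris_on_def
proof (rule continuous_on_generated_topo)
  fix \<U> assume "\<U> \<in> {{A \<in> \<H>. A \<subseteq> U} | U. openin X U} \<union> {{A \<in> \<H>. A \<inter> U \<noteq> {}} | U. openin X U}"
  then obtain U where U: "openin X U"
    and "\<U> = {A \<in> \<H>. A \<subseteq> U} \<or> \<U> = {A \<in> \<H>. A \<inter> U \<noteq> {}}"
    by blast
  then have "(\<lambda>x. {x}) -` \<U> \<inter> topspace X = U \<inter> topspace X"
    using assms by auto
  then show "openin X ((\<lambda>x. {x}) -` \<U> \<inter> topspace X)"
    using U by auto
next
  have "(\<lambda>x. {x}) ` topspace X \<subseteq> {A \<in> \<H>. A \<subseteq> topspace X}"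
    using assms by auto
  then show "(\<lambda>x. {x}) ` topspace X \<subseteq>
      \<Union> ({{A \<in> \<H>. A \<subseteq> U} | U. openin X U} \<union> {{A \<in> \<H>. A \<inter> U \<noteq> {}} | U. openin X U})"
    by blast
qed

lemma connectedin_vietoris_on_meets_clopen:
  assumes conn: "connectedin (vietoris_on X \<H>) \<C>"
    and \<H>: "\<And>A. A \<in> \<H> \<Longrightarrow> A \<subseteq> topspace X"
    and open_V: "openin (subtopology X (\<Union>\<C>)) V" and closed_V: "closedin (subtopology X (\<Union>\<C>)) V"
    and "V \<noteq> {}" and "A \<in> \<C>"
  shows "A \<inter> V \<noteq> {}"
proof -
  let ?Y = "\<Union>\<C>"
  obtain U where U: "openin X U" "V = U \<inter> ?Y"
    using open_V by (auto simp: openin_subtopology)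
  obtain K where K: "closedin X K" "V = K \<inter> ?Y"
    using closed_V by (auto simp: closedin_subtopology)
  define U' where "U' = topspace X - K"
  have U': "openin X U'"
    using K(1) by (simp add: U'_def openin_diff)
  have \<C>_sub: "\<C> \<subseteq> \<H>"
    using connectedin_subset_topspace[OF conn] topspace_vietoris_on[OF \<H>] by simp
  let ?E1 = "{C \<in> \<H>. C \<inter> U \<noteq> {}}" and ?E2 = "{C \<in> \<H>. C \<subseteq> U'}"
  have trace: "C \<inter> V = C \<inter> U" "C \<inter> V = C \<inter> K" if "C \<in> \<C>" for C
    using that U(2) K(2) by blast+
  have E1: "C \<in> ?E1 \<longleftrightarrow> C \<inter> V \<noteq> {}" and E2: "C \<in> ?E2 \<longleftrightarrow> C \<inter> V = {}" if "C \<in> \<C>" for C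
    using that \<C>_sub \<H>[of C] trace[OF that] by (auto simp: U'_def)
  have "\<C> \<subseteq> ?E1 \<union> ?E2" "?E1 \<inter> ?E2 \<inter> \<C> = {}" "?E1 \<inter> \<C> \<noteq> {}"
    using E1 E2 \<open>V \<noteq> {}\<close> U(2) by blast+
  then have "?E2 \<inter> \<C> = {}"
    using conn openin_vietoris_on_meets[OF U(1)] openin_vietoris_on_subset[OF U']
    unfolding connectedin by meson
  then show ?thesis
    using E2 \<open>A \<in> \<C>\<close> by blast
qed

lemma connected_clopen_neighbourhood_if_finite_meets_clopen:
  assumes "finite A"
    and meets: "\<And>Q. openin S Q \<Longrightarrow> closedin S Q \<Longrightarrow> Q \<noteq> {} \<Longrightarrow> A \<inter> Q \<noteq> {}"
    and "y \<in> topspace S"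
  obtains Q where "openin S Q" "closedin S Q" "y \<in> Q" "connectedin S Q"
proof -
  obtain Q where Q: "openin S Q" "closedin S Q" "y \<in> Q"
    and least: "\<And>R. openin S R \<Longrightarrow> closedin S R \<Longrightarrow> y \<in> R \<Longrightarrow> card (A \<inter> Q) \<le> card (A \<inter> R)"
    using ex_has_least_nat[of "\<lambda>Q. openin S Q \<and> closedin S Q \<and> y \<in> Q" "topspace S"
        "\<lambda>Q. card (A \<inter> Q)"] \<open>y \<in> topspace S\<close>
    by (metis openin_topspace closedin_topspace)
  have not_in_part: "y \<notin> R"
    if "R \<subseteq> Q" "openin S R" "closedin S R" "Q - R \<noteq> {}" for R
  proof
    assume "y \<in> R"
    have "A \<inter> (Q - R) \<noteq> {}"
      using meets Q that by (simp add: openin_diff closedin_diff)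
    then have "A \<inter> R \<subset> A \<inter> Q"
      using \<open>R \<subseteq> Q\<close> by blast
    then have "card (A \<inter> R) < card (A \<inter> Q)"
      using \<open>finite A\<close> by (simp add: psubset_card_mono)
    with least[OF that(2,3) \<open>y \<in> R\<close>] show False
      by simp
  qed
  have "connected_space (subtopology S Q)"
    unfolding connected_space_clopen_in
  proof (intro allI impI)
    fix T assume "openin (subtopology S Q) T \<and> closedin (subtopology S Q) T"
    then have T: "openin S T" "closedin S T" "T \<subseteq> Q"
      using Q openin_open_subtopology closedin_closed_subtopology by metis+
    then have "openin S (Q - T)" "closedin S (Q - T)"
      using Q by (auto intro: openin_diff closedin_diff)
    moreover have "Q \<subseteq> topspace S"
      using Q(1) openin_subset by blast
    ultimately show "T = {} \<or> T = topspace (subtopology S Q)"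
      using not_in_part[of T] not_in_part[of "Q - T"] T Q(3) by (auto simp: Diff_Diff_Int Int_absorb1)
  qed
  then show thesis
    using that Q openin_subset by (auto simp: connectedin_def)
qed

lemma hereditarily_disconnected_finite_meets_clopen:
  assumes "hereditarily_disconnected S" and "finite A"
    and "\<And>Q. openin S Q \<Longrightarrow> closedin S Q \<Longrightarrow> Q \<noteq> {} \<Longrightarrow> A \<inter> Q \<noteq> {}"
  shows "topspace S \<subseteq> A"
proof
  fix y assume "y \<in> topspace S"
  then obtain Q where Q: "openin S Q" "closedin S Q" "y \<in> Q" "connectedin S Q"
    using connected_clopen_neighbourhood_if_finite_meets_clopen assms(2,3) by metis
  then have "Q = {y}"
    using hereditarily_disconnectedD[OF assms(1)] by blast
  then show "y \<in> A"
    using assms(3) Q by blast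
qed

lemma hereditarily_disconnected_subtopology:
  "hereditarily_disconnected X \<Longrightarrow> hereditarily_disconnected (subtopology X Y)"
  by (simp add: hereditarily_disconnected_def connectedin_subtopology)

lemma hereditarily_disconnected_continuous_injective:
  assumes "hereditarily_disconnected Y" "continuous_map X Y f" "inj_on f (topspace X)"
  shows "hereditarily_disconnected X"
  unfolding hereditarily_disconnected_def
proof (intro allI impI)
  fix C assume "connectedin X C \<and> C \<noteq> {}"
  then have C: "connectedin X C" and "C \<noteq> {}"
    by auto
  then have "connectedin Y (f ` C)" "f ` C \<noteq> {}"
    using connectedin_continuous_map_image[OF assms(2)] by auto
  from hereditarily_disconnectedD[OF assms(1) this] obtain s where s: "f ` C = {s}" ..
  have inj: "inj_on f C"
    using inj_on_subset[OF assms(3) connectedin_subset_topspace[OF C]] .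
  obtain c where c: "c \<in> C"
    using \<open>C \<noteq> {}\<close> by blast
  have "d = c" if "d \<in> C" for d
    using inj_onD[OF inj _ that c] s that c by (metis imageI singletonD)
  then show "\<exists>x. C = {x}"
    using c by blast
qed

lemma hereditarily_disconnected_vietoris_on:
  assumes hd: "hereditarily_disconnected X" and \<H>: "\<H> \<subseteq> fin_subsets X"
  shows "hereditarily_disconnected (vietoris_on X \<H>)"
  unfolding hereditarily_disconnected_def
proof (intro allI impI)
  fix \<C> assume "connectedin (vietoris_on X \<H>) \<C> \<and> \<C> \<noteq> {}"
  then have conn: "connectedin (vietoris_on X \<H>) \<C>" and "\<C> \<noteq> {}"
    by auto
  have \<H>_in_X: "\<And>A. A \<in> \<H> \<Longrightarrow> A \<subseteq> topspace X"
    using \<H> by (auto simp: fin_subsets_def)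
  have \<C>_sub: "\<C> \<subseteq> fin_subsets X"
    using connectedin_subset_topspace[OF conn] topspace_vietoris_on[OF \<H>_in_X] \<H> by simp
  have member_eq_Union: "A = \<Union>\<C>" if "A \<in> \<C>" for A
  proof -
    have "topspace (subtopology X (\<Union>\<C>)) \<subseteq> A"
    proof (rule hereditarily_disconnected_finite_meets_clopen)
      show "hereditarily_disconnected (subtopology X (\<Union>\<C>))"
        using hd by (rule hereditarily_disconnected_subtopology)
      show "finite A"
        using that \<C>_sub by (auto simp: fin_subsets_def)
    qed (use connectedin_vietoris_on_meets_clopen[OF conn \<H>_in_X _ _ _ that] in blast)
    moreover have "\<Union>\<C> \<subseteq> topspace X"
      using \<C>_sub by (auto simp: fin_subsets_def)
    ultimately show ?thesis
      using that by auto
  qed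
  obtain A where "A \<in> \<C>"
    using \<open>\<C> \<noteq> {}\<close> by blast
  then have "\<C> = {A}"
    using member_eq_Union by auto
  then show "\<exists>x. \<C> = {x}" ..
qed

lemma hereditarily_disconnected_of_vietoris_on:
  assumes "hereditarily_disconnected (vietoris_on X \<H>)" "\<And>x. x \<in> topspace X \<Longrightarrow> {x} \<in> \<H>"
  shows "hereditarily_disconnected X"
  using hereditarily_disconnected_continuous_injective[OF assms(1)
      continuous_map_singleton_vietoris_on[OF assms(2)]]
  by (simp add: inj_on_def)

theorem corollary5p10:
  fixes X :: "'a topology"
  assumes "Hausdorff_space X"
  shows "(hereditarily_disconnected X
            \<longleftrightarrow> (\<exists>n::nat. n \<ge> 1 \<and> hereditarily_disconnected (hyperspace_Fn n X)))
       \<and> (hereditarily_disconnected X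
            \<longleftrightarrow> (\<forall>n::nat. n \<ge> 1 \<longrightarrow> hereditarily_disconnected (hyperspace_Fn n X)))
       \<and> (hereditarily_disconnected X \<longleftrightarrow> hereditarily_disconnected (hyperspace_F X))"
proof -
  have Fn: "hereditarily_disconnected X \<longleftrightarrow> hereditarily_disconnected (hyperspace_Fn n X)"
    if "n \<ge> 1" for n
    unfolding hyperspace_Fn_def
    using hereditarily_disconnected_vietoris_on[of X "fin_subsets_le n X"]
      hereditarily_disconnected_of_vietoris_on[of X "fin_subsets_le n X"] that
    by (auto simp: fin_subsets_def fin_subsets_le_def)
  have F: "hereditarily_disconnected X \<longleftrightarrow> hereditarily_disconnected (hyperspace_F X)"
    unfolding hyperspace_F_def
    using hereditarily_disconnected_vietoris_on[of X "fin_subsets X"]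
      hereditarily_disconnected_of_vietoris_on[of X "fin_subsets X"]
    by (auto simp: fin_subsets_def)
  show ?thesis
    using Fn[of 1] Fn F by blast
qed

end
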